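(* Let $A, B, C, D \in \mathrm{SL}(2,\mathbb{R})$ and for integers $k, \ell$ let $M_{k,\ell} = D^\ell C B^k A$. Suppose $\mathrm{Tr}(B) = \mathrm{Tr}(D)$. Then for all integers $k \ge 3$, $$\mathrm{Tr}(M_{k,k}) = (\mathrm{Tr}(B)^2 - 1)\big(\mathrm{Tr}(M_{k-1,k-1}) - \mathrm{Tr}(M_{k-2,k-2})\big) + \mathrm{Tr}(M_{k-3,k-3}).$$ *)

theory Defs
  imports "HOL-Analysis.Analysis"
begin

primrec matpow :: "'a::semiring_1^'n^'n \<Rightarrow> nat \<Rightarrow> 'a^'n^'n" where
  "matpow A 0 = mat 1"
| "matpow A (Suc n) = A ** matpow A n"

definition SL2 :: "(real^2^2) set" where
  "SL2 = {A. det A = 1}"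

definition Mkl :: "real^2^2 \<Rightarrow> real^2^2 \<Rightarrow> real^2^2 \<Rightarrow> real^2^2 \<Rightarrow> nat \<Rightarrow> nat \<Rightarrow> real^2^2" where
  "Mkl A B C D k l = matpow D l ** C ** matpow B k ** A"

end

theory Submission
  imports Defs
begin

text \<open>By Cayley--Hamilton every \<open>X \<in> SL(2,\<real>)\<close> satisfies \<open>X\<^sup>2 = tr X \<cdot> X - I\<close>. If
  \<open>D\<close> and \<open>B\<close> both satisfy \<open>X\<^sup>2 = t X - I\<close>, the linear map \<open>L Y = D Y B\<close> has eigenvalues
  \<open>\<lambda>\<^sup>2, 1, \<lambda>\<^sup>-\<^sup>2\<close> with \<open>\<lambda> + \<lambda>\<^sup>-\<^sup>1 = t\<close>, and indeed
  \<open>L\<^sup>3 = (t\<^sup>2 - 1)(L\<^sup>2 - L) + id\<close>. Since \<open>D\<^sup>k C B\<^sup>k = L\<^sup>k C\<close>, the sandwiches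
  \<open>D\<^sup>k C B\<^sup>k\<close> obey this linear recurrence, and so do their traces after right
  multiplication by \<open>A\<close>. Only \<open>B\<close> and \<open>D\<close> need determinant 1; \<open>A\<close> and \<open>C\<close> are arbitrary.\<close>

lemma matrix_add_rdistrib: "((A::'a::semiring_1^'n^'m) + B) ** C = A ** C + B ** C"
  by (vector matrix_matrix_mult_def sum.distrib[symmetric] field_simps)

lemma matrix_diff_ldistrib: "(A::'a::ring_1^'n^'m) ** (B - C) = A ** B - A ** C"
  by (vector matrix_matrix_mult_def sum_subtractf[symmetric] field_simps)

lemma matrix_diff_rdistrib: "((A::'a::ring_1^'n^'m) - B) ** C = A ** C - B ** C"
  by (vector matrix_matrix_mult_def sum_subtractf[symmetric] field_simps)

lemma trace_scaleR: "trace (c *\<^sub>R (A::real^'n^'n)) = c * trace A"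
  by (simp add: trace_def sum_distrib_left)

lemma matpow_add: "matpow A (m + n) = matpow A n ** matpow A m"
  by (induction n) (simp_all add: matrix_mul_assoc)

lemma cayley_hamilton_2:
  fixes A :: "real^2^2"
  shows "A ** A = trace A *\<^sub>R A - det A *\<^sub>R mat 1"
  by (simp add: vec_eq_iff forall_2 det_2 trace_def matrix_matrix_mult_def sum_2 mat_def algebra_simps)

lemmas matrix_distrib_simps = matrix_add_ldistrib matrix_add_rdistrib matrix_diff_ldistrib
  matrix_diff_rdistrib scalar_matrix_assoc[symmetric] matrix_scalar_ac

lemma matpow_2_3_of_quadratic:
  fixes X :: "real^'n^'n"
  assumes X: "X ** X = t *\<^sub>R X - mat 1"
  shows "matpow X 2 = t *\<^sub>R X - mat 1"
    and "matpow X 3 = (t\<^sup>2 - 1) *\<^sub>R X - t *\<^sub>R mat 1"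
proof -
  show X2: "matpow X 2 = t *\<^sub>R X - mat 1"
    using X by (simp add: numeral_2_eq_2)
  have "matpow X 3 = X ** matpow X 2"
    by (simp add: numeral_3_eq_3 numeral_2_eq_2)
  then show "matpow X 3 = (t\<^sup>2 - 1) *\<^sub>R X - t *\<^sub>R mat 1"
    by (simp add: X2 X matrix_distrib_simps algebra_simps power2_eq_square)
qed

lemma matpow_sandwich_3:
  fixes D B Y :: "real^'n^'n"
  assumes D: "D ** D = t *\<^sub>R D - mat 1" and B: "B ** B = t *\<^sub>R B - mat 1"
  shows "matpow D 3 ** Y ** matpow B 3
    = (t\<^sup>2 - 1) *\<^sub>R (matpow D 2 ** Y ** matpow B 2 - D ** Y ** B) + Y"
  unfolding matpow_2_3_of_quadratic[OF D] matpow_2_3_of_quadratic[OF B]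
  by (simp add: matrix_distrib_simps matrix_mul_assoc algebra_simps power2_eq_square)

lemma matpow_sandwich_recurrence:
  fixes D B Y :: "real^'n^'n"
  assumes "D ** D = t *\<^sub>R D - mat 1" and "B ** B = t *\<^sub>R B - mat 1"
  defines "S j \<equiv> matpow D j ** Y ** matpow B j"
  shows "S (n + 3) = (t\<^sup>2 - 1) *\<^sub>R (S (n + 2) - S (n + 1)) + S n"
proof -
  have S_shift: "S (n + j) = matpow D j ** S n ** matpow B j" for j
    unfolding S_def matpow_add by (metis add.commute matpow_add matrix_mul_assoc)
  show ?thesis
    unfolding S_shift[of 3] S_shift[of 2] S_shift[of 1]
    using matpow_sandwich_3[OF assms(1,2), of "S n"] by simp
qed

theorem lemma2p3:
  fixes A B C D :: "real^2^2" and k :: nat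
  assumes "A \<in> SL2" and "B \<in> SL2" and "C \<in> SL2" and "D \<in> SL2"
    and "trace B = trace D"
    and "k \<ge> 3"
  shows "trace (Mkl A B C D k k) =
    ((trace B)^2 - 1) * (trace (Mkl A B C D (k-1) (k-1)) - trace (Mkl A B C D (k-2) (k-2)))
    + trace (Mkl A B C D (k-3) (k-3))"
proof -
  obtain n where k: "k = n + 3"
    using \<open>k \<ge> 3\<close> by (metis add.commute le_iff_add)
  have D_square: "D ** D = trace B *\<^sub>R D - mat 1"
    and B_square: "B ** B = trace B *\<^sub>R B - mat 1"
    using assms(2,4,5) cayley_hamilton_2 by (auto simp: SL2_def)
  from matpow_sandwich_recurrence[OF D_square B_square, where Y = C and n = n]
  have "Mkl A B C D k k = ((trace B)\<^sup>2 - 1) *\<^sub>R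
      (Mkl A B C D (n + 2) (n + 2) - Mkl A B C D (n + 1) (n + 1)) + Mkl A B C D n n"
    unfolding Mkl_def k
    by (simp add: matrix_add_rdistrib matrix_diff_rdistrib scalar_matrix_assoc[symmetric])
  moreover have "k - 1 = n + 2" "k - 2 = n + 1" "k - 3 = n" using k by simp_all
  ultimately show ?thesis by (simp add: trace_add trace_sub trace_scaleR)
qed

end
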